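(* Let $\Phi_1,\Phi_2$ be two convex growth functions with $\Phi_2\in \mathscr{U}$. Let $s>0$ and let $\mu$ be a positive Borel measure on $\mathbb{C}_+$. Then the following assertions are equivalent. (a) There is a constant $C>0$ such that for any finite interval $I\subset\mathbb{R}$, $\mu(Q_I)\le \dfrac{C}{\Phi_2\circ\Phi_1^{-1}\left(\frac{1}{|I|^s}\right)}$. (b) There exists a constant $C>0$ such that $$\sup_{z=x+iy\in \mathbb{C}_+}\int_{\mathbb{C}_+}\Phi_2\left(\Phi_1^{-1}\left(\frac{1}{y^s}\right)\frac{y^{2s}}{|z-\bar{w}|^{2s}}\right)d\mu(w)\le C<\infty.$$ Moreover, the (best) constants in (a) and (b) are equivalent.
   Context: $\mathbb{C}_+=\{x+iy: y>0\}$. A growth function is a continuous nondecreasing function from $[0,\infty)$ onto $[0,\infty)$; $\Phi^{-1}$ is its inverse. $\mathscr{U}^q$ ($q\ge1$) is the set of growth functions $\Phi$ with $\Phi(st)\le Ct^q\Phi(s)$ for $s>0,t\ge1$ and $t\mapsto\Phi(t)/t$ nondecreasing; $\mathscr{U}=\bigcup_{q\ge1}\mathscr{U}^q$. For an interval $I\subset\mathbb{R}$, $Q_I=\{x+iy:x\in I,0<y<|I|\}$. *)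

theory Defs
  imports "HOL-Analysis.Analysis"
begin

definition growth_function :: "(real \<Rightarrow> real) \<Rightarrow> bool" where
  "growth_function \<Phi> \<longleftrightarrow>
     continuous_on {0..} \<Phi> \<and> mono_on {0..} \<Phi> \<and> \<Phi> ` {0..} = {0..}"

definition ginv :: "(real \<Rightarrow> real) \<Rightarrow> real \<Rightarrow> real" where
  "ginv \<Phi> = inv_into {0..} \<Phi>"

definition U_class :: "real \<Rightarrow> (real \<Rightarrow> real) \<Rightarrow> bool" where
  "U_class q \<Phi> \<longleftrightarrow> growth_function \<Phi> \<and>
     (\<exists>C. \<forall>s>0. \<forall>t\<ge>1. \<Phi> (s * t) \<le> C * t powr q * \<Phi> s) \<and>
     mono_on {0<..} (\<lambda>t. \<Phi> t / t)"

definition U_all :: "(real \<Rightarrow> real) \<Rightarrow> bool" where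
  "U_all \<Phi> \<longleftrightarrow> (\<exists>q\<ge>1. U_class q \<Phi>)"

definition upper_half :: "complex set" where
  "upper_half = {z. Im z > 0}"

definition Qbox :: "real \<Rightarrow> real \<Rightarrow> complex set" where
  "Qbox a b = {z. a \<le> Re z \<and> Re z \<le> b \<and> 0 < Im z \<and> Im z < b - a}"

definition cond_a :: "(real \<Rightarrow> real) \<Rightarrow> (real \<Rightarrow> real) \<Rightarrow> real \<Rightarrow> complex measure \<Rightarrow> real \<Rightarrow> bool" where
  "cond_a \<Phi>1 \<Phi>2 s \<mu> C \<longleftrightarrow>
     (\<forall>a b. a < b \<longrightarrow>
        emeasure \<mu> (Qbox a b) \<le> ennreal (C / \<Phi>2 (ginv \<Phi>1 (1 / (b - a) powr s))))"

definition cond_b :: "(real \<Rightarrow> real) \<Rightarrow> (real \<Rightarrow> real) \<Rightarrow> real \<Rightarrow> complex measure \<Rightarrow> real \<Rightarrow> bool" where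
  "cond_b \<Phi>1 \<Phi>2 s \<mu> C \<longleftrightarrow>
     (\<forall>z\<in>upper_half.
        (\<integral>\<^sup>+ w. ennreal (\<Phi>2 (ginv \<Phi>1 (1 / Im z powr s) *
             (Im z powr (2 * s) / cmod (z - cnj w) powr (2 * s)))) \<partial>\<mu>) \<le> ennreal C)"

end

(*
  (b) implies (a): test (b) at the point z = (a+b)/2 + i(b-a) above the box Q_I, I = [a,b].
  On Q_I the kernel y^(2s) / |z - conj w|^(2s) is at least 3^(-2s), and the upper type of
  Phi2 absorbs this constant.

  (a) implies (b): for fixed z = x + iy the boxes Q_k over [x - 2^k y, x + 2^k y] exhaust the
  half-plane, and outside Q_(k-1) the kernel is at most 2^(2s(1-k)). Concavity of the inverse
  of Phi1 and the dilation bound Phi2(x T) <= D (T + T^q) Phi2(x) turn condition (a) on the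
  boxes Q_k into a convergent geometric series.
*)
theory Submission
  imports Defs
begin

lemma growth_function_nonneg: "growth_function P \<Longrightarrow> 0 \<le> x \<Longrightarrow> 0 \<le> P x"
  unfolding growth_function_def by auto

lemma growth_function_mono: "growth_function P \<Longrightarrow> 0 \<le> x \<Longrightarrow> x \<le> y \<Longrightarrow> P x \<le> P y"
  unfolding growth_function_def mono_on_def by auto

lemma growth_function_0:
  assumes "growth_function P"
  shows "P 0 = 0"
proof -
  have "(0::real) \<in> P ` {0..}"
    using assms unfolding growth_function_def by auto
  then obtain x where "0 \<le> x" "P x = 0" by auto
  then show ?thesis
    using growth_function_mono[OF assms, of 0 x] growth_function_nonneg[OF assms, of 0] by simp
qed

lemma
  assumes "growth_function P" "0 \<le> v"
  shows ginv_nonneg: "0 \<le> ginv P v" and growth_function_ginv: "P (ginv P v) = v"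
proof -
  have "v \<in> P ` {0..}"
    using assms unfolding growth_function_def by auto
  then show "0 \<le> ginv P v" "P (ginv P v) = v"
    unfolding ginv_def using inv_into_into[of v P "{0..}"] f_inv_into_f[of v P "{0..}"] by auto
qed

lemma ginv_pos: "growth_function P \<Longrightarrow> 0 < v \<Longrightarrow> 0 < ginv P v"
  by (metis ginv_nonneg growth_function_0 growth_function_ginv less_eq_real_def less_irrefl)

lemma convex_growth_scale_le:
  assumes "growth_function P" "convex_on {0..} P" "0 \<le> l" "l \<le> 1" "0 \<le> x"
  shows "P (l * x) \<le> l * P x"
  using convex_onD[OF assms(2), of l 0 x] assms growth_function_0[OF assms(1)] by simp

lemma convex_growth_ginv_scale:
  assumes gf: "growth_function P" and cv: "convex_on {0..} P"
    and "0 < v" "0 < l" "l \<le> 1"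
  shows "l * ginv P v \<le> ginv P (l * v)"
proof (rule ccontr)
  define x where "x = ginv P v"
  define y where "y = ginv P (l * v)"
  assume "\<not> l * ginv P v \<le> ginv P (l * v)"
  then have "y < l * x" unfolding x_def y_def by simp
  have Px: "P x = v" and Py: "P y = l * v" and "0 \<le> y"
    using assms by (auto simp: x_def y_def growth_function_ginv ginv_nonneg)
  have "0 < l * x" using \<open>0 \<le> y\<close> \<open>y < l * x\<close> by linarith
  then have "0 < x" using \<open>0 < l\<close> by (simp add: zero_less_mult_iff)
  have "y \<le> x"
    using \<open>y < l * x\<close> mult_right_mono[OF \<open>l \<le> 1\<close> less_imp_le[OF \<open>0 < x\<close>]] by linarith
  have "P y = P ((y / x) * x)" using \<open>0 < x\<close> by simp
  also have "\<dots> \<le> (y / x) * v"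
    using convex_growth_scale_le[OF gf cv, of "y / x" x] \<open>0 \<le> y\<close> \<open>0 < x\<close> \<open>y \<le> x\<close> Px
    by (simp add: divide_le_eq)
  also have "\<dots> < l * v"
    using \<open>y < l * x\<close> \<open>0 < x\<close> \<open>0 < v\<close> by (simp add: divide_less_eq)
  finally show False using Py by simp
qed

lemma U_class_growth_function: "U_class q P \<Longrightarrow> growth_function P"
  unfolding U_class_def by simp

lemma U_class_pos:
  assumes U: "U_class q P" and "0 < t"
  shows "0 < P t"
proof (rule ccontr)
  have gf: "growth_function P" using U_class_growth_function[OF U] .
  assume "\<not> 0 < P t"
  then have Pt: "P t = 0" using growth_function_nonneg[OF gf, of t] \<open>0 < t\<close> by simp
  obtain D where D: "\<forall>s>0. \<forall>u\<ge>1. P (s * u) \<le> D * u powr q * P s"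
    using U unfolding U_class_def by auto
  have "P x \<le> 0" if "0 \<le> x" for x
  proof (cases "x \<le> t")
    case True
    then show ?thesis using growth_function_mono[OF gf that True] Pt by simp
  next
    case False
    then show ?thesis using D[rule_format, of t "x / t"] \<open>0 < t\<close> Pt by simp
  qed
  moreover have "(1::real) \<in> P ` {0..}" using gf unfolding growth_function_def by auto
  ultimately show False by fastforce
qed

text \<open>Convexity controls dilations by \<open>T \<le> 1\<close>, the upper type \<open>q\<close> those by \<open>T \<ge> 1\<close>.\<close>

lemma U_class_convex_dilation_bound:
  assumes U: "U_class q P" and cv: "convex_on {0..} P"
  obtains D where "0 < D" "\<And>x T. 0 \<le> x \<Longrightarrow> 0 < T \<Longrightarrow> P (x * T) \<le> D * (T + T powr q) * P x"
proof -
  have gf: "growth_function P" using U_class_growth_function[OF U] .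
  obtain D where D: "\<forall>s>0. \<forall>u\<ge>1. P (s * u) \<le> D * u powr q * P s"
    using U unfolding U_class_def by auto
  have "P (x * T) \<le> max D 1 * (T + T powr q) * P x" if "0 \<le> x" "0 < T" for x T
  proof -
    have Px: "0 \<le> P x" using growth_function_nonneg[OF gf \<open>0 \<le> x\<close>] .
    have "P (x * T) \<le> max D 1 * T * P x + max D 1 * T powr q * P x"
    proof (cases "T \<le> 1")
      case True
      then have "P (x * T) \<le> T * P x"
        using convex_growth_scale_le[OF gf cv, of T x] \<open>0 \<le> x\<close> \<open>0 < T\<close> by (simp add: mult.commute)
      also have "\<dots> \<le> max D 1 * T * P x"
        using Px \<open>0 < T\<close> by (simp add: mult_right_mono)
      finally show ?thesis using Px by (simp add: add_increasing2)
    next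
      case False
      then have "P (x * T) \<le> D * T powr q * P x"
        using D \<open>0 \<le> x\<close> growth_function_0[OF gf] by (cases "x = 0") auto
      also have "\<dots> \<le> max D 1 * T powr q * P x"
        using Px by (simp add: mult_right_mono)
      finally show ?thesis using Px \<open>0 < T\<close> by (simp add: add_increasing)
    qed
    then show ?thesis by (simp add: algebra_simps)
  qed
  then show thesis using that[of "max D 1"] by simp
qed

lemma
  assumes "sets M = sets (restrict_space borel upper_half)"
  shows space_eq_upper_half: "space M = upper_half"
    and Qbox_in_sets: "Qbox a b \<in> sets M"
proof -
  show "space M = upper_half"
    using sets_eq_imp_space_eq[OF assms] by (simp add: space_restrict_space)
  have "Qbox a b = {z. a \<le> Re z} \<inter> {z. Re z \<le> b} \<inter> {z. 0 < Im z} \<inter> {z. Im z < b - a}"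
    unfolding Qbox_def by auto
  also have "\<dots> \<in> sets borel"
    by (intro sets.Int borel_closed borel_open closed_halfspace_Re_ge closed_halfspace_Re_le
        open_halfspace_Im_gt open_halfspace_Im_lt)
  finally have "Qbox a b \<in> sets borel" .
  moreover have "upper_half \<in> sets borel"
    unfolding upper_half_def by (simp add: borel_open open_halfspace_Im_gt)
  moreover have "Qbox a b \<subseteq> upper_half"
    unfolding Qbox_def upper_half_def by auto
  ultimately show "Qbox a b \<in> sets M"
    using assms sets_restrict_space_iff[of upper_half borel] by auto
qed

lemma emeasure_le_of_nn_integral_lower_bound:
  assumes "Q \<in> sets M" "0 < c" "\<And>w. w \<in> Q \<Longrightarrow> c \<le> f w"
    and "(\<integral>\<^sup>+ w. ennreal (f w) \<partial>M) \<le> ennreal C"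
  shows "emeasure M Q \<le> ennreal (C / c)"
proof -
  have "ennreal c * emeasure M Q = (\<integral>\<^sup>+ w. ennreal c * indicator Q w \<partial>M)"
    using nn_integral_cmult_indicator[OF assms(1)] by simp
  also have "\<dots> \<le> (\<integral>\<^sup>+ w. ennreal (f w) \<partial>M)"
    using assms(3) by (intro nn_integral_mono) (auto simp: indicator_def ennreal_leI)
  also have "\<dots> \<le> ennreal C" by (rule assms(4))
  finally have "ennreal c * emeasure M Q \<le> ennreal C" .
  then have "ennreal (1 / c) * (ennreal c * emeasure M Q) \<le> ennreal (1 / c) * ennreal C"
    by (rule mult_left_mono) simp
  then show ?thesis
    using \<open>0 < c\<close> by (simp add: ennreal_mult'[symmetric] mult.assoc[symmetric] divide_ennreal)
qed

lemma nn_integral_le_suminf_emeasure: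
  assumes "\<And>k. Q k \<in> sets M" "\<And>k. 0 \<le> c k"
    and "\<And>w. w \<in> space M \<Longrightarrow> \<exists>k. w \<in> Q k \<and> f w \<le> c k"
  shows "(\<integral>\<^sup>+ w. ennreal (f w) \<partial>M) \<le> (\<Sum>k. ennreal (c k) * emeasure M (Q k))"
proof -
  have "ennreal (f w) \<le> (\<Sum>k. ennreal (c k) * indicator (Q k) w)" if w: "w \<in> space M" for w
  proof -
    obtain k where "w \<in> Q k" "f w \<le> c k" using assms(3)[OF w] by blast
    then have "ennreal (f w) \<le> (\<Sum>i\<in>{k}. ennreal (c i) * indicator (Q i) w)"
      by (simp add: ennreal_leI)
    also have "\<dots> \<le> (\<Sum>i. ennreal (c i) * indicator (Q i) w)"
      by (rule sum_le_suminf) auto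
    finally show ?thesis .
  qed
  then have "(\<integral>\<^sup>+ w. ennreal (f w) \<partial>M) \<le> (\<integral>\<^sup>+ w. (\<Sum>k. ennreal (c k) * indicator (Q k) w) \<partial>M)"
    by (rule nn_integral_mono)
  also have "\<dots> = (\<Sum>k. \<integral>\<^sup>+ w. ennreal (c k) * indicator (Q k) w \<partial>M)"
    using assms(1) by (intro nn_integral_suminf) auto
  also have "\<dots> = (\<Sum>k. ennreal (c k) * emeasure M (Q k))"
    using assms(1) by (simp add: nn_integral_cmult_indicator)
  finally show ?thesis .
qed

lemma Qbox_kernel_lower_bound:
  assumes w: "w \<in> Qbox a b" and "0 \<le> s"
  shows "1 / 3 powr (2 * s) \<le> (b - a) powr (2 * s) / cmod (Complex ((a + b) / 2) (b - a) - cnj w) powr (2 * s)"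
proof -
  define h where "h = b - a"
  define u where "u = Complex ((a + b) / 2) h - cnj w"
  have wQ: "a \<le> Re w" "Re w \<le> b" "0 < Im w" "Im w < h"
    using w unfolding Qbox_def h_def by auto
  have "Re u = (a + b) / 2 - Re w" "Im u = h + Im w"
    unfolding u_def by auto
  then have "cmod u \<le> \<bar>(a + b) / 2 - Re w\<bar> + \<bar>h + Im w\<bar>" and "\<bar>h + Im w\<bar> \<le> cmod u"
    using cmod_le[of u] abs_Im_le_cmod[of u] by auto
  moreover have "\<bar>(a + b) / 2 - Re w\<bar> \<le> h"
    using wQ unfolding h_def abs_le_iff by (auto simp: field_simps)
  ultimately have u_pos: "0 < cmod u" and u_le: "cmod u \<le> 3 * h"
    using wQ by auto
  have "cmod u powr (2 * s) \<le> 3 powr (2 * s) * h powr (2 * s)"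
    using powr_mono2[of "2 * s" "cmod u" "3 * h"] u_le \<open>0 \<le> s\<close> wQ
    by (simp add: powr_mult)
  then show ?thesis
    using u_pos wQ unfolding u_def[symmetric] h_def[symmetric] by (simp add: field_simps)
qed

lemma cond_b_imp_cond_a:
  assumes gf1: "growth_function P1" and U: "U_class q P2"
    and dil: "\<And>x T. 0 \<le> x \<Longrightarrow> 0 < T \<Longrightarrow> P2 (x * T) \<le> D * (T + T powr q) * P2 x"
    and M: "sets \<mu> = sets (restrict_space borel upper_half)"
    and "0 < s" "0 \<le> C" and cb: "cond_b P1 P2 s \<mu> C"
  shows "cond_a P1 P2 s \<mu> (D * (3 powr (2 * s) + 3 powr (2 * s * q)) * C)"
  unfolding cond_a_def
proof (intro allI impI)
  fix a b :: real assume "a < b"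
  define z where "z = Complex ((a + b) / 2) (b - a)"
  define A where "A = ginv P1 (1 / (b - a) powr s)"
  define T :: real where "T = 3 powr (2 * s)"
  define c where "c = P2 (A / T)"
  have gf2: "growth_function P2" using U_class_growth_function[OF U] .
  have "0 < A" unfolding A_def using ginv_pos[OF gf1] \<open>a < b\<close> by simp
  have "0 < T" unfolding T_def by simp
  have "0 < c" unfolding c_def using U_class_pos[OF U] \<open>0 < A\<close> \<open>0 < T\<close> by simp
  have "P2 A \<le> D * (T + T powr q) * c"
    using dil[of "A / T" T] \<open>0 < A\<close> \<open>0 < T\<close> unfolding c_def by simp
  have "z \<in> upper_half" unfolding z_def upper_half_def using \<open>a < b\<close> by simp
  have "c \<le> P2 (A * (Im z powr (2 * s) / cmod (z - cnj w) powr (2 * s)))" if "w \<in> Qbox a b" for w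
  proof -
    have "A / T \<le> A * (Im z powr (2 * s) / cmod (z - cnj w) powr (2 * s))"
      using Qbox_kernel_lower_bound[OF that, of s] \<open>0 < s\<close> \<open>0 < A\<close> mult_left_mono[of _ _ A]
      unfolding z_def T_def by fastforce
    then show ?thesis
      unfolding c_def using growth_function_mono[OF gf2] \<open>0 < A\<close> \<open>0 < T\<close> by simp
  qed
  moreover have "(\<integral>\<^sup>+ w. ennreal (P2 (A * (Im z powr (2 * s) / cmod (z - cnj w) powr (2 * s)))) \<partial>\<mu>) \<le> ennreal C"
    using bspec[OF cb[unfolded cond_b_def] \<open>z \<in> upper_half\<close>] unfolding A_def
    by (simp add: z_def)
  ultimately have "emeasure \<mu> (Qbox a b) \<le> ennreal (C / c)"
    by (intro emeasure_le_of_nn_integral_lower_bound[OF Qbox_in_sets[OF M] \<open>0 < c\<close>])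
  also have "C / c \<le> D * (T + T powr q) * C / P2 A"
  proof -
    have "C * P2 A \<le> C * (D * (T + T powr q) * c)"
      using \<open>P2 A \<le> D * (T + T powr q) * c\<close> \<open>0 \<le> C\<close> by (rule mult_left_mono)
    then show ?thesis
      using \<open>0 < c\<close> U_class_pos[OF U \<open>0 < A\<close>] by (simp add: field_simps)
  qed
  finally show "emeasure \<mu> (Qbox a b) \<le> ennreal (D * (3 powr (2 * s) + 3 powr (2 * s * q)) * C / P2 (ginv P1 (1 / (b - a) powr s)))"
    unfolding T_def A_def by (simp add: powr_powr ennreal_leI)
qed

text \<open>Take the least \<open>k\<close> with \<open>w \<in> Q_k\<close>; for \<open>k > 0\<close> the point \<open>w\<close> lies outside \<open>Q_(k-1)\<close>,
  which forces \<open>|z - conj w| \<ge> 2^(k-1) y\<close>.\<close>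

lemma Qbox_dyadic_cover:
  assumes "0 < y" "0 < Im w" "Re z = x" "Im z = y"
  obtains k :: nat where "w \<in> Qbox (x - 2 ^ k * y) (x + 2 ^ k * y)"
    and "2 powr (real k - 1) * y \<le> cmod (z - cnj w)"
proof -
  let ?Q = "\<lambda>k::nat. Qbox (x - 2 ^ k * y) (x + 2 ^ k * y)"
  have Q_iff: "w \<in> ?Q k \<longleftrightarrow> \<bar>Re w - x\<bar> \<le> 2 ^ k * y \<and> Im w < 2 * 2 ^ k * y" for k
    using assms unfolding Qbox_def by (auto simp: abs_le_iff mult_ac)
  obtain n :: nat where "(\<bar>Re w - x\<bar> + Im w) / y < 2 ^ n"
    using real_arch_pow[of 2] by auto
  then have "w \<in> ?Q n"
    unfolding Q_iff using assms by (simp add: field_simps)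
  define k where "k = (LEAST k. w \<in> ?Q k)"
  have "w \<in> ?Q k"
    unfolding k_def using \<open>w \<in> ?Q n\<close> by (rule LeastI)
  have Re_le: "\<bar>Re w - x\<bar> \<le> cmod (z - cnj w)" and Im_le: "y + Im w \<le> cmod (z - cnj w)"
    using abs_Re_le_cmod[of "z - cnj w"] abs_Im_le_cmod[of "z - cnj w"] assms by auto
  have "2 powr (real k - 1) * y \<le> cmod (z - cnj w)"
  proof (cases k)
    case 0
    then show ?thesis using Im_le assms by (simp add: powr_minus_divide)
  next
    case (Suc j)
    then have "w \<notin> ?Q j"
      unfolding k_def by (metis lessI not_less_Least)
    then have "2 ^ j * y \<le> cmod (z - cnj w)"
      unfolding Q_iff using Re_le Im_le assms by auto
    then show ?thesis using Suc by (simp add: powr_realpow)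
  qed
  with \<open>w \<in> ?Q k\<close> show thesis by (rule that)
qed

lemma kernel_le_of_dist_ge:
  assumes "0 < y" "0 \<le> s" "2 powr (real k - 1) * y \<le> cmod u"
  shows "y powr (2 * s) / cmod u powr (2 * s) \<le> 2 powr (2 * s * (1 - real k))"
proof -
  have "2 powr ((real k - 1) * (2 * s)) * y powr (2 * s) = (2 powr (real k - 1) * y) powr (2 * s)"
    using assms by (simp add: powr_mult powr_powr)
  also have "\<dots> \<le> cmod u powr (2 * s)"
    using assms by (intro powr_mono2) auto
  finally have le: "2 powr ((real k - 1) * (2 * s)) * y powr (2 * s) \<le> cmod u powr (2 * s)" .
  have "0 < cmod u" using assms(1,3) by (smt (verit) mult_pos_pos powr_gt_zero)
  have "y powr (2 * s) / cmod u powr (2 * s) \<le> y powr (2 * s) / (2 powr ((real k - 1) * (2 * s)) * y powr (2 * s))"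
    using le assms \<open>0 < cmod u\<close> by (intro divide_left_mono) auto
  also have "\<dots> = 2 powr (2 * s * (1 - real k))"
    using assms by (simp add: powr_minus_divide[symmetric] algebra_simps)
  finally show ?thesis .
qed

lemma cond_a_emeasure_le_rescaled:
  assumes gf1: "growth_function P1" and cv1: "convex_on {0..} P1" and U: "U_class q P2"
    and "0 \<le> C" and ca: "cond_a P1 P2 s \<mu> C" and "a < b"
    and "0 < v" "0 < l" "l \<le> 1" and side: "1 / (b - a) powr s = l * v"
  shows "emeasure \<mu> (Qbox a b) \<le> ennreal (C / P2 (l * ginv P1 v))"
proof -
  have gf2: "growth_function P2" using U_class_growth_function[OF U] .
  have "0 < l * ginv P1 v" using ginv_pos[OF gf1 \<open>0 < v\<close>] \<open>0 < l\<close> by simp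
  have "l * ginv P1 v \<le> ginv P1 (l * v)"
    using convex_growth_ginv_scale[OF gf1 cv1] assms(7-9) .
  then have "P2 (l * ginv P1 v) \<le> P2 (ginv P1 (1 / (b - a) powr s))"
    unfolding side using growth_function_mono[OF gf2] \<open>0 < l * ginv P1 v\<close> by simp
  then have "C / P2 (ginv P1 (1 / (b - a) powr s)) \<le> C / P2 (l * ginv P1 v)"
    using U_class_pos[OF U \<open>0 < l * ginv P1 v\<close>] \<open>0 \<le> C\<close> by (intro divide_left_mono) auto
  then show ?thesis
    using ca \<open>a < b\<close> unfolding cond_a_def by (meson ennreal_leI order_trans)
qed

lemma ennreal_mult_le_of_le_divide:
  assumes "m \<le> ennreal (C / p)" "0 < p" "0 \<le> C" "0 \<le> c" "c \<le> K * p"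
  shows "ennreal c * m \<le> ennreal (C * K)"
proof -
  have "ennreal c * m \<le> ennreal c * ennreal (C / p)"
    using assms(1) by (rule mult_left_mono) simp
  also have "\<dots> = ennreal (c * (C / p))"
    using \<open>0 \<le> c\<close> by (rule ennreal_mult'[symmetric])
  also have "c * (C / p) \<le> C * K"
  proof -
    have "C * c \<le> C * (K * p)" using assms(5) \<open>0 \<le> C\<close> by (rule mult_left_mono)
    then show ?thesis using \<open>0 < p\<close> by (simp add: field_simps)
  qed
  finally show ?thesis by (simp add: ennreal_leI)
qed

text \<open>On \<open>Q_k\<close>, whose side is \<open>2^(k+1) y\<close>, the kernel is at most \<open>2^(2s(1-k)) = \<lambda> T\<close> with
  \<open>\<lambda> = 2^(-s(k+1))\<close> and \<open>T = 2^(s(3-k))\<close>: the factor \<open>\<lambda>\<close> is absorbed by condition (a) for \<open>Q_k\<close>,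
  the dilation by \<open>T\<close> costs \<open>T + T^q\<close>, which decays geometrically in \<open>k\<close>.\<close>

lemma cond_a_dyadic_box_bound:
  assumes gf1: "growth_function P1" and cv1: "convex_on {0..} P1" and U: "U_class q P2"
    and dil: "\<And>x T. 0 \<le> x \<Longrightarrow> 0 < T \<Longrightarrow> P2 (x * T) \<le> D * (T + T powr q) * P2 x"
    and "0 < s" "0 < y" "0 \<le> C" and ca: "cond_a P1 P2 s \<mu> C"
  shows "ennreal (P2 (ginv P1 (1 / y powr s) * 2 powr (2 * s * (1 - real k))))
           * emeasure \<mu> (Qbox (x - 2 ^ k * y) (x + 2 ^ k * y))
         \<le> ennreal (C * D * 2 powr (3 * s) * (2 powr (- s)) ^ k
                    + C * D * 2 powr (3 * s * q) * (2 powr (- s * q)) ^ k)"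
proof -
  define A where "A = ginv P1 (1 / y powr s)"
  define lam :: real where "lam = 2 powr (- s * (real k + 1))"
  define T :: real where "T = 2 powr (s * (3 - real k))"
  have gf2: "growth_function P2" using U_class_growth_function[OF U] .
  have "0 < A" unfolding A_def using ginv_pos[OF gf1] \<open>0 < y\<close> by simp
  have "0 < s * (real k + 1)" using \<open>0 < s\<close> by simp
  then have "0 < lam" "lam \<le> 1"
    unfolding lam_def using powr_less_one[of 2 "- s * (real k + 1)"] by auto
  have "0 < T" unfolding T_def by simp
  have "1 / ((x + 2 ^ k * y) - (x - 2 ^ k * y)) powr s = lam * (1 / y powr s)"
    unfolding lam_def using \<open>0 < y\<close>
    by (simp add: powr_mult powr_powr powr_minus_divide powr_add powr_diff algebra_simps flip: powr_realpow)
  then have "emeasure \<mu> (Qbox (x - 2 ^ k * y) (x + 2 ^ k * y)) \<le> ennreal (C / P2 (lam * A))"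
    unfolding A_def using \<open>0 < y\<close> \<open>0 < lam\<close> \<open>lam \<le> 1\<close>
    by (intro cond_a_emeasure_le_rescaled[OF gf1 cv1 U \<open>0 \<le> C\<close> ca]) auto
  moreover have "P2 (A * 2 powr (2 * s * (1 - real k))) \<le> D * (T + T powr q) * P2 (lam * A)"
  proof -
    have "A * 2 powr (2 * s * (1 - real k)) = (lam * A) * T"
      unfolding lam_def T_def by (simp add: powr_add[symmetric] algebra_simps)
    then show ?thesis
      using dil[of "lam * A" T] \<open>0 < lam\<close> \<open>0 < A\<close> \<open>0 < T\<close> by (simp only:) simp
  qed
  moreover have "0 \<le> P2 (A * 2 powr (2 * s * (1 - real k)))"
    using growth_function_nonneg[OF gf2] \<open>0 < A\<close> by simp
  ultimately have "ennreal (P2 (A * 2 powr (2 * s * (1 - real k)))) * emeasure \<mu> (Qbox (x - 2 ^ k * y) (x + 2 ^ k * y))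
      \<le> ennreal (C * (D * (T + T powr q)))"
    using U_class_pos[OF U] \<open>0 < lam\<close> \<open>0 < A\<close> \<open>0 \<le> C\<close> by (intro ennreal_mult_le_of_le_divide) auto
  also have "C * (D * (T + T powr q)) = C * D * 2 powr (3 * s) * (2 powr (- s)) ^ k
                                      + C * D * 2 powr (3 * s * q) * (2 powr (- s * q)) ^ k"
    unfolding T_def by (simp add: powr_power powr_powr powr_add[symmetric] algebra_simps)
  finally show ?thesis unfolding A_def .
qed

lemma suminf_ennreal_two_geometric:
  fixes a b r1 r2 :: real
  assumes "0 \<le> a" "0 \<le> b" "0 \<le> r1" "r1 < 1" "0 \<le> r2" "r2 < 1"
  shows "(\<Sum>k. ennreal (a * r1 ^ k + b * r2 ^ k)) = ennreal (a / (1 - r1) + b / (1 - r2))"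
proof -
  have "(\<lambda>k. a * r1 ^ k + b * r2 ^ k) sums (a / (1 - r1) + b / (1 - r2))"
    using sums_add[OF sums_mult[OF geometric_sums[of r1]] sums_mult[OF geometric_sums[of r2]], of a b] assms
    by simp
  then have "(\<lambda>k. ennreal (a * r1 ^ k + b * r2 ^ k)) sums ennreal (a / (1 - r1) + b / (1 - r2))"
    using assms by (subst sums_ennreal) auto
  then show ?thesis by (rule sums_unique[symmetric])
qed

lemma cond_a_imp_cond_b:
  assumes gf1: "growth_function P1" and cv1: "convex_on {0..} P1" and U: "U_class q P2" and "0 < q"
    and dil: "\<And>x T. 0 \<le> x \<Longrightarrow> 0 < T \<Longrightarrow> P2 (x * T) \<le> D * (T + T powr q) * P2 x"
    and M: "sets \<mu> = sets (restrict_space borel upper_half)"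
    and "0 < s" "0 \<le> C" and ca: "cond_a P1 P2 s \<mu> C"
  shows "cond_b P1 P2 s \<mu> (D * (2 powr (3 * s) / (1 - 2 powr (- s)) + 2 powr (3 * s * q) / (1 - 2 powr (- s * q))) * C)"
  unfolding cond_b_def
proof
  fix z assume "z \<in> upper_half"
  define x where "x = Re z"
  define y where "y = Im z"
  define A where "A = ginv P1 (1 / y powr s)"
  define Q where "Q k = Qbox (x - 2 ^ k * y) (x + 2 ^ k * y)" for k :: nat
  define c where "c k = P2 (A * 2 powr (2 * s * (1 - real k)))" for k :: nat
  have gf2: "growth_function P2" using U_class_growth_function[OF U] .
  have "0 < y" using \<open>z \<in> upper_half\<close> unfolding y_def upper_half_def by simp
  have "0 < A" unfolding A_def using ginv_pos[OF gf1] \<open>0 < y\<close> by simp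
  have "0 \<le> D"
    using dil[of 1 1] U_class_pos[OF U, of 1] by (simp add: zero_le_mult_iff)
  have dominated: "\<exists>k. w \<in> Q k \<and> P2 (A * (y powr (2 * s) / cmod (z - cnj w) powr (2 * s))) \<le> c k"
    if "w \<in> space \<mu>" for w
  proof -
    have "0 < Im w" using that space_eq_upper_half[OF M] unfolding upper_half_def by simp
    then obtain k where "w \<in> Q k" and dist: "2 powr (real k - 1) * y \<le> cmod (z - cnj w)"
      using Qbox_dyadic_cover[OF \<open>0 < y\<close>] unfolding Q_def x_def y_def by metis
    have "A * (y powr (2 * s) / cmod (z - cnj w) powr (2 * s)) \<le> A * 2 powr (2 * s * (1 - real k))"
      using \<open>0 < s\<close> \<open>0 < A\<close> by (intro mult_left_mono kernel_le_of_dist_ge[OF \<open>0 < y\<close> _ dist]) auto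
    then show ?thesis
      unfolding c_def using \<open>w \<in> Q k\<close> growth_function_mono[OF gf2] \<open>0 < A\<close> by auto
  qed
  have "(\<integral>\<^sup>+ w. ennreal (P2 (A * (y powr (2 * s) / cmod (z - cnj w) powr (2 * s)))) \<partial>\<mu>)
      \<le> (\<Sum>k. ennreal (c k) * emeasure \<mu> (Q k))"
    using dominated growth_function_nonneg[OF gf2] \<open>0 < A\<close> unfolding Q_def c_def
    by (intro nn_integral_le_suminf_emeasure Qbox_in_sets[OF M]) auto
  also have "\<dots> \<le> (\<Sum>k. ennreal (C * D * 2 powr (3 * s) * (2 powr (- s)) ^ k
                                  + C * D * 2 powr (3 * s * q) * (2 powr (- s * q)) ^ k))"
    unfolding c_def Q_def A_def
    using cond_a_dyadic_box_bound[OF gf1 cv1 U dil \<open>0 < s\<close> \<open>0 < y\<close> \<open>0 \<le> C\<close> ca]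
    by (intro suminf_le) auto
  also have "\<dots> = ennreal (C * D * 2 powr (3 * s) / (1 - 2 powr (- s)) + C * D * 2 powr (3 * s * q) / (1 - 2 powr (- s * q)))"
    using \<open>0 < s\<close> \<open>0 < q\<close> \<open>0 \<le> C\<close> \<open>0 \<le> D\<close>
    by (intro suminf_ennreal_two_geometric) (auto intro: powr_less_one)
  finally show "(\<integral>\<^sup>+ w. ennreal (P2 (ginv P1 (1 / Im z powr s) * (Im z powr (2 * s) / cmod (z - cnj w) powr (2 * s)))) \<partial>\<mu>)
      \<le> ennreal (D * (2 powr (3 * s) / (1 - 2 powr (- s)) + 2 powr (3 * s * q) / (1 - 2 powr (- s * q))) * C)"
    unfolding A_def y_def by (simp add: algebra_simps)
qed

lemma cond_a_mono:
  assumes "growth_function P1" "growth_function P2" "cond_a P1 P2 s \<mu> C" "C \<le> C'"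
  shows "cond_a P1 P2 s \<mu> C'"
  unfolding cond_a_def
proof (intro allI impI)
  fix a b :: real assume "a < b"
  have "0 \<le> P2 (ginv P1 (1 / (b - a) powr s))"
    using assms(1,2) by (simp add: ginv_nonneg growth_function_nonneg)
  then show "emeasure \<mu> (Qbox a b) \<le> ennreal (C' / P2 (ginv P1 (1 / (b - a) powr s)))"
    using assms(3,4) \<open>a < b\<close> unfolding cond_a_def
    by (meson divide_right_mono ennreal_leI order_trans)
qed

lemma cond_b_mono: "cond_b P1 P2 s \<mu> C \<Longrightarrow> C \<le> C' \<Longrightarrow> cond_b P1 P2 s \<mu> C'"
  unfolding cond_b_def by (meson ennreal_leI order_trans)

theorem theorem4p1:
  fixes \<Phi>1 \<Phi>2 :: "real \<Rightarrow> real" and s :: real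
  assumes "growth_function \<Phi>1" "convex_on {0..} \<Phi>1"
    and "growth_function \<Phi>2" "convex_on {0..} \<Phi>2"
    and "U_all \<Phi>2"
    and "s > 0"
  shows "\<exists>K>0. \<forall>\<mu>::complex measure.
           sets \<mu> = sets (restrict_space borel upper_half) \<longrightarrow>
           ((\<exists>C>0. cond_a \<Phi>1 \<Phi>2 s \<mu> C) \<longleftrightarrow> (\<exists>C>0. cond_b \<Phi>1 \<Phi>2 s \<mu> C)) \<and>
           (\<forall>C>0. cond_a \<Phi>1 \<Phi>2 s \<mu> C \<longrightarrow> cond_b \<Phi>1 \<Phi>2 s \<mu> (K * C)) \<and>
           (\<forall>C>0. cond_b \<Phi>1 \<Phi>2 s \<mu> C \<longrightarrow> cond_a \<Phi>1 \<Phi>2 s \<mu> (K * C))"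
proof -
  obtain q where "1 \<le> q" and U: "U_class q \<Phi>2"
    using assms(5) unfolding U_all_def by auto
  obtain D where "0 < D" and dil: "\<And>x T. 0 \<le> x \<Longrightarrow> 0 < T \<Longrightarrow> \<Phi>2 (x * T) \<le> D * (T + T powr q) * \<Phi>2 x"
    using U_class_convex_dilation_bound[OF U assms(4)] by blast
  define K_ab where "K_ab = D * (2 powr (3 * s) / (1 - 2 powr (- s)) + 2 powr (3 * s * q) / (1 - 2 powr (- s * q)))"
  define K_ba where "K_ba = D * (3 powr (2 * s) + 3 powr (2 * s * q))"
  define K where "K = max K_ab K_ba"
  have "0 < K" unfolding K_def K_ba_def using \<open>0 < D\<close> by (simp add: less_max_iff_disj add_pos_pos)
  have ab: "cond_b \<Phi>1 \<Phi>2 s \<mu> (K * C)"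
    if "sets \<mu> = sets (restrict_space borel upper_half)" "0 < C" "cond_a \<Phi>1 \<Phi>2 s \<mu> C" for \<mu> C
  proof (rule cond_b_mono)
    show "cond_b \<Phi>1 \<Phi>2 s \<mu> (K_ab * C)"
      unfolding K_ab_def by (rule cond_a_imp_cond_b[OF assms(1,2) U]) (use dil that \<open>1 \<le> q\<close> assms(6) in auto)
  qed (simp add: K_def \<open>0 < C\<close> mult_right_mono)
  have ba: "cond_a \<Phi>1 \<Phi>2 s \<mu> (K * C)"
    if "sets \<mu> = sets (restrict_space borel upper_half)" "0 < C" "cond_b \<Phi>1 \<Phi>2 s \<mu> C" for \<mu> C
  proof (rule cond_a_mono[OF assms(1,3)])
    show "cond_a \<Phi>1 \<Phi>2 s \<mu> (K_ba * C)"
      unfolding K_ba_def by (rule cond_b_imp_cond_a[OF assms(1) U]) (use dil that assms(6) in auto)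
  qed (simp add: K_def \<open>0 < C\<close> mult_right_mono)
  show ?thesis
    using ab ba \<open>0 < K\<close> by (metis mult_pos_pos)
qed

end
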